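(* Let $p>2$ be a prime and $d\geq 2$ an integer with $p-1=df$. Let $\omega$ be a fixed generator of $\mathbb{F}_p^*$, and for $i,j\in\mathbb{Z}/d\mathbb{Z}$ let $(i,j)=\#\{(u,v):0\leq u,v\leq f-1,\ 1+\omega^{du+i}\equiv\omega^{dv+j}\pmod p\}$ be the cyclotomic numbers of order $d$. Let $\theta=0$ if $f$ is even and $\theta=d/2$ if $f$ is odd. Let $a\in\mathbb{F}_p^*\setminus(\mathbb{F}_p^* )^d$ and $\alpha\equiv\mathrm{ind}_\omega(a)\pmod d$. Then $s_d(p,a)=2$ if $(\alpha+\theta,\theta)\neq0$, and otherwise \[ s_d(p,a)=\min\{s\mid \exists\,0\leq i_2,\dots,i_{s-1}\leq d-1:\ (\alpha+\theta,i_2)(i_2,i_3)\cdots(i_{s-1},\theta)\neq0\}. \]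
   Context: For $a\in\mathbb{F}_p^*$, $s_d(p,a)=\min\{k\mid a=\sum_{i=1}^k a_i^d,\ a_i\in\mathbb{F}_p^*\}$. $\mathrm{ind}_\omega(a)$ is the discrete logarithm of $a$ to base $\omega$. Indices of cyclotomic numbers are taken modulo $d$. *)

theory Defs
  imports "HOL-Number_Theory.Number_Theory"
begin

definition cyc :: "nat \<Rightarrow> nat \<Rightarrow> nat \<Rightarrow> int \<Rightarrow> int \<Rightarrow> nat" where
  "cyc p d w i j = card {(u, v). u < (p - 1) div d \<and> v < (p - 1) div d \<and>
      [1 + w ^ (d * u + nat (i mod int d)) = w ^ (d * v + nat (j mod int d))] (mod p)}"

definition waring_sd :: "nat \<Rightarrow> nat \<Rightarrow> nat \<Rightarrow> nat" where
  "waring_sd p d a = (LEAST k. \<exists>xs :: nat list. length xs = k \<and> (\<forall>x\<in>set xs. \<not> p dvd x) \<and>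
      [a = (\<Sum>x\<leftarrow>xs. x ^ d)] (mod p))"

definition cyc_chain_nonzero :: "nat \<Rightarrow> nat \<Rightarrow> nat \<Rightarrow> int list \<Rightarrow> bool" where
  "cyc_chain_nonzero p d w L = (\<forall>k. k + 1 < length L \<longrightarrow> cyc p d w (L ! k) (L ! (k + 1)) \<noteq> 0)"

end

theory Submission
  imports Defs
begin

text \<open>Split \<open>\<bbbF>\<^sub>p\<^sup>*\<close> into the cosets \<open>C\<^sub>i = \<omega>\<^sup>i (\<bbbF>\<^sub>p\<^sup>*)\<^sup>d\<close>, \<open>i\<close> mod \<open>d\<close>; then \<open>-1 \<in> C\<^sub>\<theta>\<close> and
  \<open>-a \<in> C\<^sub>\<alpha>\<^sub>+\<^sub>\<theta>\<close>. The cyclotomic number \<open>(i,j)\<close> is nonzero iff some \<open>x \<in> C\<^sub>i\<close> has \<open>1 + x \<in> C\<^sub>j\<close>,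
  and by homogeneity iff from every \<open>T \<in> C\<^sub>i\<close> one reaches \<open>C\<^sub>j\<close> by adding a nonzero \<open>d\<close>-th power.
  So the partial sums \<open>-a + y\<^sub>1 + \<dots> + y\<^sub>k\<close> of a shortest representation \<open>a = y\<^sub>1 + \<dots> + y\<^sub>s\<close>
  (nonzero by minimality, the last one equal to \<open>-y\<^sub>s \<in> C\<^sub>\<theta>\<close>) trace a chain of nonzero cyclotomic
  numbers from \<open>\<alpha> + \<theta>\<close> to \<open>\<theta>\<close>; conversely such a chain of length \<open>s\<close> gives \<open>s - 1\<close> powers
  leading from \<open>-a\<close> into \<open>C\<^sub>\<theta>\<close>, and one more power reaches \<open>0\<close> because \<open>2\<theta> \<equiv> 0\<close>.\<close>

lemma cyc_chain_nonzero_single: "cyc_chain_nonzero p d w [i]"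
  by (simp add: cyc_chain_nonzero_def)

lemma cyc_chain_nonzero_Cons_Cons:
  "cyc_chain_nonzero p d w (i # j # L) \<longleftrightarrow> cyc p d w i j \<noteq> 0 \<and> cyc_chain_nonzero p d w (j # L)"
  (is "?C \<longleftrightarrow> _")
proof
  assume ?C
  then have "cyc p d w ((i # j # L) ! k) ((i # j # L) ! (k + 1)) \<noteq> 0" if "k < Suc (length L)" for k
    using that unfolding cyc_chain_nonzero_def by simp
  from this[of 0] this[of "Suc k" for k]
  show "cyc p d w i j \<noteq> 0 \<and> cyc_chain_nonzero p d w (j # L)"
    unfolding cyc_chain_nonzero_def by simp
next
  assume "cyc p d w i j \<noteq> 0 \<and> cyc_chain_nonzero p d w (j # L)"
  then show ?C
    unfolding cyc_chain_nonzero_def by (auto simp: less_Suc_eq_0_disj)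
qed

definition power_sum_repr :: "nat \<Rightarrow> nat \<Rightarrow> nat \<Rightarrow> nat list \<Rightarrow> bool" where
  "power_sum_repr p d a xs \<longleftrightarrow> (\<forall>x\<in>set xs. \<not> p dvd x) \<and> [a = (\<Sum>x\<leftarrow>xs. x ^ d)] (mod p)"

lemma waring_sd_eq_Least_power_sum_repr:
  "waring_sd p d a = (LEAST k. \<exists>xs. length xs = k \<and> power_sum_repr p d a xs)"
  by (simp add: waring_sd_def power_sum_repr_def)

lemma power_sum_repr_int_iff:
  "power_sum_repr p d a xs \<longleftrightarrow>
    (\<forall>x\<in>set xs. \<not> p dvd x) \<and> [int a = (\<Sum>x\<leftarrow>xs. int x ^ d)] (mod int p)"
  by (simp add: power_sum_repr_def cong_int_iff[symmetric] sum_list_of_nat[symmetric] o_def)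

locale cyclotomic_classes =
  fixes p d w :: nat
  assumes prime: "prime p" and p_gt_2: "p > 2" and d_pos: "d > 0" and d_dvd: "d dvd p - 1"
    and ord_w: "ord p w = p - 1"
begin

definition in_class :: "int \<Rightarrow> int \<Rightarrow> bool" where
  "in_class i x \<longleftrightarrow> (\<exists>k::nat. [x = int w ^ k] (mod int p) \<and> [int k = i] (mod int d))"

lemma coprime_p_w: "coprime p w"
  using ord_w p_gt_2 ord_eq_0[of p w] by auto

lemma power_w_cong_iff: "[int w ^ k = int w ^ l] (mod int p) \<longleftrightarrow> [k = l] (mod p - 1)"
  using order_divides_expdiff[OF coprime_p_w, of k l] ord_w
  by (metis cong_int_iff of_nat_power)

lemma power_w_not_dvd: "\<not> int p dvd int w ^ k"
  using coprime_p_w prime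
  by (metis coprime_absorb_left not_prime_unit of_nat_dvd_iff of_nat_power prime_dvd_power)

lemma unit_is_power_w:
  assumes "\<not> int p dvd x"
  shows "\<exists>k. [x = int w ^ k] (mod int p)"
proof -
  define y where "y = nat (x mod int p)"
  have y: "int y = x mod int p" "y < p"
    using p_gt_2 by (simp_all add: y_def nat_less_iff)
  with assms have "y \<noteq> 0" by (auto simp: dvd_eq_mod_eq_0)
  with y have "\<not> p dvd y" by (auto dest: dvd_imp_le)
  with y \<open>y \<noteq> 0\<close> have "y \<in> totatives p"
    using prime by (auto simp: totatives_def prime_imp_coprime coprime_commute)
  moreover have "residue_primroot p w"
    using coprime_p_w ord_w prime p_gt_2 by (simp add: residue_primroot_def totient_prime)
  ultimately obtain k where "y = w ^ k mod p"
    using residue_primroot_is_generator[of p w] p_gt_2 by (auto simp: bij_betw_def)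
  then have "int w ^ k mod int p = x mod int p"
    using y by (simp add: zmod_int)
  then show ?thesis by (metis cong_def)
qed

lemma in_class_not_dvd: "in_class i x \<Longrightarrow> \<not> int p dvd x"
  unfolding in_class_def using power_w_not_dvd by (metis cong_dvd_iff)

lemma in_class_exists:
  assumes "\<not> int p dvd x"
  shows "\<exists>i. 0 \<le> i \<and> i \<le> int d - 1 \<and> in_class i x"
proof -
  obtain k where "[x = int w ^ k] (mod int p)" using unit_is_power_w assms by blast
  then have "in_class (int k mod int d) x"
    unfolding in_class_def by (auto simp: cong_def)
  then show ?thesis using d_pos by (intro exI[of _ "int k mod int d"]) auto
qed

lemma in_class_cong: "[x = y] (mod int p) \<Longrightarrow> in_class i x \<Longrightarrow> in_class i y"
  unfolding in_class_def by (meson cong_sym cong_trans)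

lemma in_class_index_cong: "[i = j] (mod int d) \<Longrightarrow> in_class i x \<Longrightarrow> in_class j x"
  unfolding in_class_def by (meson cong_trans)

lemma in_class_mult:
  assumes "in_class i x" "in_class j y"
  shows "in_class (i + j) (x * y)"
proof -
  obtain k l where "[x = int w ^ k] (mod int p)" "[int k = i] (mod int d)"
    and "[y = int w ^ l] (mod int p)" "[int l = j] (mod int d)"
    using assms unfolding in_class_def by blast
  then have "[x * y = int w ^ (k + l)] (mod int p)" "[int (k + l) = i + j] (mod int d)"
    by (auto simp: power_add intro: cong_mult cong_add)
  then show ?thesis unfolding in_class_def by blast
qed

lemma in_class_unique:
  assumes "in_class i x" "in_class j x"
  shows "[i = j] (mod int d)"
proof -
  obtain k l where k: "[x = int w ^ k] (mod int p)" "[int k = i] (mod int d)"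
    and l: "[x = int w ^ l] (mod int p)" "[int l = j] (mod int d)"
    using assms unfolding in_class_def by blast
  then have "[k = l] (mod p - 1)"
    using power_w_cong_iff by (metis cong_sym cong_trans)
  then have "[int k = int l] (mod int d)"
    using d_dvd by (metis cong_dvd_modulus_nat cong_int_iff)
  with k l show ?thesis by (meson cong_sym cong_trans)
qed

lemma in_class_inverse:
  assumes "in_class i x"
  shows "\<exists>x'. in_class (- i) x' \<and> [x * x' = 1] (mod int p)"
proof -
  obtain k where k: "[x = int w ^ k] (mod int p)" "[int k = i] (mod int d)"
    using assms unfolding in_class_def by blast
  define k' where "k' = (p - 2) * k"
  have sum: "k + k' = (p - 1) * k"
    using p_gt_2 by (simp add: k'_def algebra_simps)
  then have "[int w ^ k * int w ^ k' = int w ^ 0] (mod int p)"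
    unfolding power_add[symmetric] power_w_cong_iff by (simp add: cong_0_iff)
  then have "[x * int w ^ k' = 1] (mod int p)"
    using k(1) by (metis cong_scalar_right cong_trans power_0)
  moreover have "[int k' = - i] (mod int d)"
  proof -
    have "int d dvd int k + int k'"
      using sum d_dvd by (metis dvd_mult2 of_nat_add of_nat_dvd_iff)
    moreover have "int d dvd int k - i"
      using k(2) by (simp add: cong_iff_dvd_diff)
    ultimately have "int d dvd (int k + int k') - (int k - i)"
      by (rule dvd_diff)
    then show ?thesis by (simp add: cong_iff_dvd_diff)
  qed
  ultimately show ?thesis unfolding in_class_def by (blast intro: cong_refl)
qed

lemma p_minus_1_eq_double_half: "p - 1 = 2 * ((p - 1) div 2)"
  using prime_odd_nat[OF prime p_gt_2] by presburger

lemma minus_one_cong_power_w: "[- 1 = int w ^ ((p - 1) div 2)] (mod int p)"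
proof -
  define h where "h = (p - 1) div 2"
  have p_h: "p - 1 = 2 * h" unfolding h_def by (rule p_minus_1_eq_double_half)
  have "w > 0" using coprime_p_w p_gt_2 by (cases "w = 0") auto
  have "[int w ^ h * int w ^ h = int w ^ 0] (mod int p)"
    unfolding power_add[symmetric] power_w_cong_iff using p_h by (simp add: cong_0_iff mult_2)
  then have "[int w ^ h = 1] (mod int p) \<or> [int w ^ h = - 1] (mod int p)"
    using prime \<open>w > 0\<close> by (intro cong_square) (auto simp: prime_nat_int_transfer)
  moreover have "\<not> [int w ^ h = int w ^ 0] (mod int p)"
    unfolding power_w_cong_iff using p_h p_gt_2 by (simp add: cong_def)
  ultimately show ?thesis unfolding h_def by (simp add: cong_sym)
qed

lemma minus_one_in_class: "in_class (if even ((p - 1) div d) then 0 else int d div 2) (- 1)"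
proof -
  define f where "f = (p - 1) div d"
  define h where "h = (p - 1) div 2"
  have p_h: "p - 1 = 2 * h" unfolding h_def by (rule p_minus_1_eq_double_half)
  have p_f: "p - 1 = d * f" using d_dvd unfolding f_def by simp
  have "[int h = (if even f then 0 else int d div 2)] (mod int d)"
  proof (cases "even f")
    case True
    then obtain g where "f = 2 * g" by blast
    then have "h = d * g" using p_h p_f by simp
    then show ?thesis using True by (simp add: cong_0_iff)
  next
    case False
    have "even (d * f)" using p_h p_f by (metis dvd_triv_left)
    then have "even d" using False by simp
    then obtain e where e: "d = 2 * e" by blast
    obtain g where g: "f = 2 * g + 1" using False by (metis oddE)
    have "h = e + d * g" using p_h p_f e g by (simp add: algebra_simps)
    then show ?thesis using False e by (simp add: cong_def)
  qed
  then show ?thesis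
    using minus_one_cong_power_w unfolding in_class_def f_def h_def by blast
qed

lemma in_class_iff_normal_form:
  "in_class i x \<longleftrightarrow>
    (\<exists>u < (p - 1) div d. [x = int w ^ (d * u + nat (i mod int d))] (mod int p))"
proof
  assume "in_class i x"
  then obtain k where k: "[x = int w ^ k] (mod int p)" "[int k = i] (mod int d)"
    unfolding in_class_def by blast
  define u where "u = k mod (p - 1) div d"
  have "k mod (p - 1) mod d = k mod d"
    using d_dvd by (simp add: mod_mod_cancel)
  moreover have "int (k mod d) = i mod int d"
    using k(2) by (simp add: cong_def zmod_int)
  ultimately have k_mod: "d * u + nat (i mod int d) = k mod (p - 1)"
    unfolding u_def by (metis div_mult_mod_eq mult.commute nat_int)
  have "k mod (p - 1) < (p - 1) div d * d"
    using d_dvd p_gt_2 by simp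
  then have "u < (p - 1) div d"
    unfolding u_def by (rule less_mult_imp_div_less)
  moreover have "[int w ^ k = int w ^ (k mod (p - 1))] (mod int p)"
    unfolding power_w_cong_iff by (simp add: cong_def)
  ultimately show "\<exists>u < (p - 1) div d. [x = int w ^ (d * u + nat (i mod int d))] (mod int p)"
    using k(1) k_mod by (metis cong_trans)
next
  assume "\<exists>u < (p - 1) div d. [x = int w ^ (d * u + nat (i mod int d))] (mod int p)"
  then obtain u where "[x = int w ^ (d * u + nat (i mod int d))] (mod int p)" by blast
  moreover have "[int (d * u + nat (i mod int d)) = i] (mod int d)"
    using d_pos by (simp add: cong_def mod_add_left_eq[symmetric])
  ultimately show "in_class i x" unfolding in_class_def by blast
qed

lemma cyc_nonzero_iff: "cyc p d w i j \<noteq> 0 \<longleftrightarrow> (\<exists>x. in_class i x \<and> in_class j (1 + x))"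
proof -
  let ?e = "\<lambda>u i. d * u + nat (i mod int d)"
  define S where "S = {(u, v). u < (p - 1) div d \<and> v < (p - 1) div d \<and>
    [1 + w ^ ?e u i = w ^ ?e v j] (mod p)}"
  have "finite S"
    by (rule finite_subset[of _ "{..<(p - 1) div d} \<times> {..<(p - 1) div d}"]) (auto simp: S_def)
  then have "cyc p d w i j \<noteq> 0 \<longleftrightarrow> S \<noteq> {}"
    by (simp add: cyc_def S_def)
  also have "\<dots> \<longleftrightarrow> (\<exists>u < (p - 1) div d. \<exists>v < (p - 1) div d.
      [1 + int w ^ ?e u i = int w ^ ?e v j] (mod int p))"
    by (auto simp: S_def cong_int_iff[symmetric])
  also have "\<dots> \<longleftrightarrow> (\<exists>x. in_class i x \<and> in_class j (1 + x))"
    unfolding in_class_iff_normal_form by (blast intro: cong_refl cong_add cong_trans cong_sym)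
  finally show ?thesis .
qed

lemma in_class_zero_iff: "in_class 0 y \<longleftrightarrow> (\<exists>z. \<not> p dvd z \<and> [y = int z ^ d] (mod int p))"
proof
  assume "in_class 0 y"
  then obtain k where k: "[y = int w ^ k] (mod int p)" "d dvd k"
    unfolding in_class_def by (auto simp: cong_0_iff)
  then obtain m where "k = d * m" by blast
  with k(1) have "[y = int (w ^ m) ^ d] (mod int p)"
    by (simp add: power_mult[symmetric] mult.commute)
  moreover have "\<not> p dvd w ^ m"
    using power_w_not_dvd[of m] by (metis of_nat_dvd_iff of_nat_power)
  ultimately show "\<exists>z. \<not> p dvd z \<and> [y = int z ^ d] (mod int p)" by blast
next
  assume "\<exists>z. \<not> p dvd z \<and> [y = int z ^ d] (mod int p)"
  then obtain z where z: "\<not> p dvd z" "[y = int z ^ d] (mod int p)" by blast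
  then have "\<not> int p dvd int z" by simp
  then obtain k where "[int z = int w ^ k] (mod int p)"
    using unit_is_power_w by blast
  then have "[int z ^ d = int w ^ (k * d)] (mod int p)"
    by (simp add: cong_pow power_mult)
  then have "[y = int w ^ (k * d)] (mod int p)"
    using z(2) by (rule cong_trans[rotated])
  then show "in_class 0 y"
    unfolding in_class_def by (auto simp: cong_0_iff)
qed

lemma cyc_nonzero_iff_step:
  assumes T: "in_class i T"
  shows "cyc p d w i j \<noteq> 0 \<longleftrightarrow> (\<exists>z. \<not> p dvd z \<and> in_class j (T + int z ^ d))"
proof
  assume "cyc p d w i j \<noteq> 0"
  then obtain x where x: "in_class i x" "in_class j (1 + x)"
    using cyc_nonzero_iff by blast
  obtain x' where x': "in_class (- i) x'" "[x * x' = 1] (mod int p)"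
    using in_class_inverse[OF x(1)] by blast
  define y where "y = T * x'"
  have "in_class (i + - i) y"
    unfolding y_def using T x'(1) by (rule in_class_mult)
  then obtain z where z: "\<not> p dvd z" "[y = int z ^ d] (mod int p)"
    using in_class_zero_iff by auto
  have "y * (1 + x) = y + T * (x * x')"
    by (simp add: y_def algebra_simps)
  also have "[\<dots> = int z ^ d + T * 1] (mod int p)"
    using z(2) x'(2) by (intro cong_add cong_mult cong_refl)
  finally have "[y * (1 + x) = T + int z ^ d] (mod int p)"
    by (simp add: add.commute)
  moreover have "in_class j (y * (1 + x))"
    using in_class_mult[OF \<open>in_class (i + - i) y\<close> x(2)] by simp
  ultimately have "in_class j (T + int z ^ d)"
    by (rule in_class_cong)
  with z(1) show "\<exists>z. \<not> p dvd z \<and> in_class j (T + int z ^ d)" by blast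
next
  assume "\<exists>z. \<not> p dvd z \<and> in_class j (T + int z ^ d)"
  then obtain z where z: "\<not> p dvd z" "in_class j (T + int z ^ d)" by blast
  have "in_class 0 (int z ^ d)"
    unfolding in_class_zero_iff using z(1) by (blast intro: cong_refl)
  then obtain y' where y': "in_class (- 0) y'" "[int z ^ d * y' = 1] (mod int p)"
    using in_class_inverse by blast
  define x where "x = T * y'"
  have "in_class (i + - 0) x"
    unfolding x_def using T y'(1) by (rule in_class_mult)
  have "y' * (T + int z ^ d) = x + int z ^ d * y'"
    by (simp add: x_def algebra_simps)
  also have "[\<dots> = x + 1] (mod int p)"
    using y'(2) by (intro cong_add cong_refl)
  finally have "[y' * (T + int z ^ d) = 1 + x] (mod int p)"
    by (simp add: add.commute)
  moreover have "in_class j (y' * (T + int z ^ d))"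
    using in_class_mult[OF y'(1) z(2)] by simp
  ultimately have "in_class j (1 + x)"
    by (rule in_class_cong)
  then show "cyc p d w i j \<noteq> 0"
    using \<open>in_class (i + - 0) x\<close> cyc_nonzero_iff by auto
qed

lemma in_class_one: "in_class 0 1"
  unfolding in_class_def by (intro exI[of _ 0]) auto

lemma in_class_minus_one_double: "in_class t (- 1) \<Longrightarrow> [t + t = 0] (mod int d)"
  using in_class_mult[of t "- 1" t "- 1"] in_class_one in_class_unique by auto

lemma sum_of_powers_of_chain:
  assumes "cyc_chain_nonzero p d w (i # js)" "in_class i T"
  shows "\<exists>zs. length zs = length js \<and> (\<forall>z\<in>set zs. \<not> p dvd z) \<and>
    in_class (last (i # js)) (T + (\<Sum>z\<leftarrow>zs. int z ^ d))"
  using assms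
proof (induction js arbitrary: i T)
  case Nil
  then show ?case by (intro exI[of _ "[]"]) simp
next
  case (Cons j js)
  have "cyc p d w i j \<noteq> 0" and chain: "cyc_chain_nonzero p d w (j # js)"
    using Cons.prems(1) by (simp_all add: cyc_chain_nonzero_Cons_Cons)
  then obtain z where z: "\<not> p dvd z" "in_class j (T + int z ^ d)"
    using cyc_nonzero_iff_step[OF Cons.prems(2)] by blast
  moreover obtain zs where "length zs = length js" "\<forall>z\<in>set zs. \<not> p dvd z"
    "in_class (last (j # js)) (T + int z ^ d + (\<Sum>z\<leftarrow>zs. int z ^ d))"
    using Cons.IH[OF chain z(2)] by blast
  ultimately show ?case
    by (intro exI[of _ "z # zs"]) (simp add: add.assoc)
qed

lemma chain_of_partial_sums:
  assumes "zs \<noteq> []" "\<forall>z\<in>set zs. \<not> p dvd z"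
    and "\<forall>k < length zs. \<not> int p dvd T + (\<Sum>z\<leftarrow>take k zs. int z ^ d)"
    and "in_class i T" "in_class j (T + (\<Sum>z\<leftarrow>zs. int z ^ d))"
  shows "\<exists>js. length js = length zs - 1 \<and> (\<forall>k\<in>set js. 0 \<le> k \<and> k \<le> int d - 1) \<and>
    cyc_chain_nonzero p d w ([i] @ js @ [j])"
  using assms
proof (induction zs arbitrary: i T)
  case Nil
  then show ?case by simp
next
  case (Cons z zs)
  show ?case
  proof (cases "zs = []")
    case True
    then have "in_class j (T + int z ^ d)"
      using Cons.prems(5) by simp
    then have "cyc p d w i j \<noteq> 0"
      using cyc_nonzero_iff_step[OF Cons.prems(4)] Cons.prems(2) by auto
    then show ?thesis
      using True by (simp add: cyc_chain_nonzero_Cons_Cons cyc_chain_nonzero_single)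
  next
    case False
    then have "\<not> int p dvd T + int z ^ d"
      using Cons.prems(3)[rule_format, of 1] by simp
    then obtain i' where i': "0 \<le> i'" "i' \<le> int d - 1" "in_class i' (T + int z ^ d)"
      using in_class_exists by blast
    have "cyc p d w i i' \<noteq> 0"
      using cyc_nonzero_iff_step[OF Cons.prems(4)] Cons.prems(2) i'(3) by auto
    moreover have "\<forall>k < length zs. \<not> int p dvd T + int z ^ d + (\<Sum>z\<leftarrow>take k zs. int z ^ d)"
    proof (intro allI impI)
      fix k assume "k < length zs"
      then show "\<not> int p dvd T + int z ^ d + (\<Sum>z\<leftarrow>take k zs. int z ^ d)"
        using Cons.prems(3)[rule_format, of "Suc k"] by (simp add: add.assoc)
    qed
    moreover have "in_class j (T + int z ^ d + (\<Sum>z\<leftarrow>zs. int z ^ d))"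
      using Cons.prems(5) by (simp add: add.assoc)
    ultimately obtain js where "length js = length zs - 1" "\<forall>k\<in>set js. 0 \<le> k \<and> k \<le> int d - 1"
      "cyc_chain_nonzero p d w ([i'] @ js @ [j])"
      using Cons.IH[OF False _ _ i'(3)] Cons.prems(2) by auto
    with \<open>cyc p d w i i' \<noteq> 0\<close> show ?thesis
      using False i' by (intro exI[of _ "i' # js"]) (simp add: cyc_chain_nonzero_Cons_Cons)
  qed
qed

lemma power_sum_repr_of_chain:
  assumes "in_class t (- 1)" "in_class i (- int a)" "cyc_chain_nonzero p d w ([i] @ js @ [t])"
  shows "\<exists>xs. length xs = length js + 2 \<and> power_sum_repr p d a xs"
proof -
  obtain zs where zs: "length zs = length js + 1" "\<forall>z\<in>set zs. \<not> p dvd z"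
    "in_class t (- int a + (\<Sum>z\<leftarrow>zs. int z ^ d))"
    using sum_of_powers_of_chain[of i "js @ [t]" "- int a"] assms(2,3) by auto
  have "in_class (t + t) (- 1 * (- int a + (\<Sum>z\<leftarrow>zs. int z ^ d)))"
    using assms(1) zs(3) by (rule in_class_mult)
  then have "in_class 0 (int a - (\<Sum>z\<leftarrow>zs. int z ^ d))"
    using in_class_index_cong[OF in_class_minus_one_double[OF assms(1)]] by simp
  then obtain z where z: "\<not> p dvd z" "[int a - (\<Sum>z\<leftarrow>zs. int z ^ d) = int z ^ d] (mod int p)"
    using in_class_zero_iff by blast
  from z(2) have "[int a = (\<Sum>x\<leftarrow>zs @ [z]. int x ^ d)] (mod int p)"
    by (simp add: cong_iff_dvd_diff algebra_simps)
  then show ?thesis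
    using zs(1,2) z(1) by (intro exI[of _ "zs @ [z]"]) (simp add: power_sum_repr_int_iff)
qed

lemma chain_of_minimal_power_sum_repr:
  assumes "in_class t (- 1)" "in_class i (- int a)" "\<nexists>x. [x ^ d = a] (mod p)"
    and "power_sum_repr p d a xs" "\<And>ys. power_sum_repr p d a ys \<Longrightarrow> length xs \<le> length ys"
  shows "\<exists>js. length xs \<ge> 2 \<and> length js = length xs - 2 \<and>
    (\<forall>k\<in>set js. 0 \<le> k \<and> k \<le> int d - 1) \<and> cyc_chain_nonzero p d w ([i] @ js @ [t])"
proof -
  have units: "\<forall>x\<in>set xs. \<not> p dvd x" and sum: "[int a = (\<Sum>x\<leftarrow>xs. int x ^ d)] (mod int p)"
    using assms(4) by (simp_all add: power_sum_repr_int_iff)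
  have "length xs \<noteq> 0"
    using sum in_class_not_dvd[OF assms(2)] by (auto simp: cong_0_iff)
  moreover have "length xs \<noteq> 1"
  proof
    assume "length xs = 1"
    then obtain x where "xs = [x]" by (auto simp: length_Suc_conv)
    then have "[x ^ d = a] (mod p)"
      using sum by (simp add: cong_sym cong_int_iff[symmetric])
    with assms(3) show False by blast
  qed
  ultimately have len: "length xs \<ge> 2" by linarith
  define zs where "zs = butlast xs"
  define z where "z = last xs"
  have "xs \<noteq> []" using len by auto
  then have xs: "xs = zs @ [z]" by (simp add: zs_def z_def)
  have partial: "\<not> int p dvd - int a + (\<Sum>x\<leftarrow>take k zs. int x ^ d)" if "k < length zs" for k
  proof
    assume "int p dvd - int a + (\<Sum>x\<leftarrow>take k zs. int x ^ d)"
    then have "power_sum_repr p d a (take k xs)"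
      using units that by (auto simp: power_sum_repr_int_iff cong_iff_dvd_diff dvd_diff_commute xs dest: in_set_takeD)
    then show False
      using assms(5) that xs by fastforce
  qed
  have "in_class (t + 0) (- 1 * int z ^ d)"
    using units xs by (intro in_class_mult assms(1)) (auto simp: in_class_zero_iff intro: cong_refl)
  moreover have "[- 1 * int z ^ d = - int a + (\<Sum>x\<leftarrow>zs. int x ^ d)] (mod int p)"
    using sum by (simp add: xs cong_iff_dvd_diff algebra_simps)
  ultimately have "in_class t (- int a + (\<Sum>x\<leftarrow>zs. int x ^ d))"
    by (simp add: in_class_cong)
  moreover have "zs \<noteq> []" using len xs by auto
  ultimately obtain js where "length js = length zs - 1" "\<forall>k\<in>set js. 0 \<le> k \<and> k \<le> int d - 1"
    "cyc_chain_nonzero p d w ([i] @ js @ [t])"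
    using chain_of_partial_sums[of zs "- int a" i t] partial assms(2) units xs by auto
  then show ?thesis
    using len xs by auto
qed

theorem waring_sd_eq_Least_chain:
  assumes "in_class t (- 1)" "in_class i (- int a)" "\<nexists>x. [x ^ d = a] (mod p)"
  shows "waring_sd p d a = (LEAST s. \<exists>js. s \<ge> 2 \<and> length js = s - 2 \<and>
    (\<forall>k\<in>set js. 0 \<le> k \<and> k \<le> int d - 1) \<and> cyc_chain_nonzero p d w ([i] @ js @ [t]))"
    (is "_ = (LEAST s. ?chain s)")
proof -
  have "power_sum_repr p d a (replicate a 1)"
    using prime by (auto simp: power_sum_repr_def sum_list_replicate)
  then have "\<exists>k xs. length xs = k \<and> power_sum_repr p d a xs" by blast
  then have "\<exists>xs. length xs = waring_sd p d a \<and> power_sum_repr p d a xs"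
    unfolding waring_sd_eq_Least_power_sum_repr by (rule LeastI_ex)
  then obtain xs where xs: "length xs = waring_sd p d a" "power_sum_repr p d a xs"
    by blast
  have minimal: "length xs \<le> length ys" if "power_sum_repr p d a ys" for ys
    using that unfolding xs(1) waring_sd_eq_Least_power_sum_repr by (auto intro: Least_le)
  show ?thesis
  proof (rule Least_equality[symmetric])
    show "?chain (waring_sd p d a)"
      using chain_of_minimal_power_sum_repr[OF assms xs(2) minimal] xs(1) by auto
    show "waring_sd p d a \<le> s" if "?chain s" for s
      using that power_sum_repr_of_chain[OF assms(1,2)] minimal xs(1) by fastforce
  qed
qed

end

theorem theorem1:
  fixes p d w a \<alpha> :: nat and \<theta> :: int
  assumes "prime p" and "p > 2" and "d \<ge> 2" and "d dvd (p - 1)"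
    and "ord p w = p - 1"
    and "\<theta> = (if even ((p - 1) div d) then 0 else int d div 2)"
    and "\<not> p dvd a" and "\<not> (\<exists>x. [x ^ d = a] (mod p))"
    and "\<alpha> < d" and "\<exists>k. [w ^ k = a] (mod p) \<and> [k = \<alpha>] (mod d)"
  shows "(cyc p d w (int \<alpha> + \<theta>) \<theta> \<noteq> 0 \<longrightarrow> waring_sd p d a = 2) \<and>
         (cyc p d w (int \<alpha> + \<theta>) \<theta> = 0 \<longrightarrow>
            waring_sd p d a = (LEAST s. \<exists>is :: int list. s \<ge> 2 \<and> length is = s - 2 \<and>
               (\<forall>i\<in>set is. 0 \<le> i \<and> i \<le> int d - 1) \<and>
               cyc_chain_nonzero p d w ([int \<alpha> + \<theta>] @ is @ [\<theta>])))"
proof -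
  interpret cyclotomic_classes p d w
    using assms(1-5) by unfold_locales auto
  have theta: "in_class \<theta> (- 1)"
    using minus_one_in_class assms(6) by simp
  obtain k where "[w ^ k = a] (mod p)" "[k = \<alpha>] (mod d)"
    using assms(10) by blast
  then have "in_class (int \<alpha>) (int a)"
    unfolding in_class_def by (metis cong_int_iff cong_sym of_nat_power)
  from in_class_mult[OF this theta] have "in_class (int \<alpha> + \<theta>) (- int a)"
    by simp
  note least = waring_sd_eq_Least_chain[OF theta this assms(8)]
  show ?thesis
  proof (intro conjI impI)
    assume "cyc p d w (int \<alpha> + \<theta>) \<theta> \<noteq> 0"
    then show "waring_sd p d a = 2"
      unfolding least
      by (intro Least_equality exI[of _ "[]"])
        (auto simp: cyc_chain_nonzero_Cons_Cons cyc_chain_nonzero_single)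
  qed (rule least)
qed

end
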